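(* For any ${\cal X}_5$-interpretation $\langle H,T\rangle$ and any program $\Pi$: $\langle H,T\rangle\models\Pi$ if and only if $H$ is a model of $\Pi^T$ and $T$ is a model of $\Pi$.
   Context: Fix a set $\mathit{At}$ of atoms. An explicit literal is $p$ or $\sim p$; a set of explicit literals is consistent if it never contains both $p$ and $\sim p$. Nested expressions: $F ::= \top\mid\bot\mid p\mid F\vee F\mid F\wedge F\mid\neg F\mid\sim F$; a rule is $F\to G$ with $F,G$ nested expressions; a program is a set of rules. Classical satisfaction/falsification of nested expressions by a consistent set $T$: $T\models\top$, $T$ does not falsify $\top$, $T\not\models\bot$, $T=\!\!|\;\bot$; $T\models p$ iff $p\in T$, $T=\!\!|\;p$ iff $\sim p\in T$; $\wedge$: satisfied iff both, falsified iff at least one falsified; $\vee$: satisfied iff at least one, falsified iff both falsified; $T\models\sim\varphi$ iff $T=\!\!|\;\varphi$, $T=\!\!|\;\sim\varphi$ iff $T\models\varphi$; $T\models\neg\varphi$ iff $T\not\models\varphi$, $T=\!\!|\;\neg\varphi$ iff $T\models\varphi$. $T$ is a model of a program if for each rule $F\to G$, $T\models F$ implies $T\models G$. Reduct: $\top^T=\top$, $\bot^T=\bot$, $p^T=p$, $(F\wedge G)^T=F^T\wedge G^T$, $(F\vee G)^T=F^T\vee G^T$, $(\sim F)^T=\sim(F^T)$, $(\neg F)^T=\bot$ if $T\models F$, $\top$ otherwise; $\Pi^T=\{F^T\to G^T\mid (F\to G)\in\Pi\}$. ${\cal X}_5$: formulas $\varphi ::= p\mid\bot\mid\varphi\wedge\varphi\mid\varphi\vee\varphi\mid\varphi\to\varphi\mid\sim\varphi$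 with $\neg\varphi:=\varphi\to\bot$, $\top:=\neg\bot$ (so rules are formulas). An ${\cal X}_5$-interpretation is a pair $\langle H,T\rangle$ of consistent sets of explicit literals with $H\subseteq T$. Satisfaction/falsification: $\langle H,T\rangle\not\models\bot$, $=\!\!|\;\bot$; $\models p$ iff $p\in H$, $=\!\!|\;p$ iff $\sim p\in H$; $\wedge,\vee,\sim$ as in the classical clauses with $\langle H,T\rangle$ in place of $T$; $\langle H,T\rangle\models\varphi\to\psi$ iff (i) $\langle H,T\rangle\not\models\varphi$ or $\langle H,T\rangle\models\psi$ and (ii) $\langle T,T\rangle\not\models\varphi$ or $\langle T,T\rangle\models\psi$; $\langle H,T\rangle=\!\!|\;\varphi\to\psi$ iff $\langle T,T\rangle\models\varphi$ and $\langle H,T\rangle=\!\!|\;\psi$. $\langle H,T\rangle\models\Pi$ means $\langle H,T\rangle$ satisfies every rule of $\Pi$. *)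

theory Defs
  imports Main
begin

datatype 'a lit = Pos 'a | SNeg 'a

definition consistent :: "'a lit set \<Rightarrow> bool" where
  "consistent T \<longleftrightarrow> (\<forall>p. \<not> (Pos p \<in> T \<and> SNeg p \<in> T))"

datatype 'a nexp =
    NTop | NBot | NAtom 'a
  | NOr "'a nexp" "'a nexp" | NAnd "'a nexp" "'a nexp"
  | NNot "'a nexp" | NSneg "'a nexp"

text \<open>A rule F -> G is a pair (F, G); a program is a set of rules.\<close>
type_synonym 'a rule = "'a nexp \<times> 'a nexp"
type_synonym 'a program = "'a rule set"

fun csat :: "'a lit set \<Rightarrow> 'a nexp \<Rightarrow> bool"
and cfal :: "'a lit set \<Rightarrow> 'a nexp \<Rightarrow> bool" where
  "csat T NTop = True"
| "csat T NBot = False"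
| "csat T (NAtom p) = (Pos p \<in> T)"
| "csat T (NAnd F G) = (csat T F \<and> csat T G)"
| "csat T (NOr F G) = (csat T F \<or> csat T G)"
| "csat T (NSneg F) = cfal T F"
| "csat T (NNot F) = (\<not> csat T F)"
| "cfal T NTop = False"
| "cfal T NBot = True"
| "cfal T (NAtom p) = (SNeg p \<in> T)"
| "cfal T (NAnd F G) = (cfal T F \<or> cfal T G)"
| "cfal T (NOr F G) = (cfal T F \<and> cfal T G)"
| "cfal T (NSneg F) = csat T F"
| "cfal T (NNot F) = csat T F"

definition cmodel :: "'a lit set \<Rightarrow> 'a program \<Rightarrow> bool" where
  "cmodel T \<Pi> \<longleftrightarrow> (\<forall>(F, G) \<in> \<Pi>. csat T F \<longrightarrow> csat T G)"

fun reduct :: "'a nexp \<Rightarrow> 'a lit set \<Rightarrow> 'a nexp" where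
  "reduct NTop T = NTop"
| "reduct NBot T = NBot"
| "reduct (NAtom p) T = NAtom p"
| "reduct (NAnd F G) T = NAnd (reduct F T) (reduct G T)"
| "reduct (NOr F G) T = NOr (reduct F T) (reduct G T)"
| "reduct (NSneg F) T = NSneg (reduct F T)"
| "reduct (NNot F) T = (if csat T F then NBot else NTop)"

definition reduct_prog :: "'a program \<Rightarrow> 'a lit set \<Rightarrow> 'a program" where
  "reduct_prog \<Pi> T = {(reduct F T, reduct G T) | F G. (F, G) \<in> \<Pi>}"

datatype 'a x5 =
    XAtom 'a | XBot | XAnd "'a x5" "'a x5" | XOr "'a x5" "'a x5"
  | XImp "'a x5" "'a x5" | XSneg "'a x5"

definition XNot :: "'a x5 \<Rightarrow> 'a x5" where "XNot \<phi> = XImp \<phi> XBot"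
definition XTop :: "'a x5" where "XTop = XNot XBot"

fun to_x5 :: "'a nexp \<Rightarrow> 'a x5" where
  "to_x5 NTop = XTop"
| "to_x5 NBot = XBot"
| "to_x5 (NAtom p) = XAtom p"
| "to_x5 (NAnd F G) = XAnd (to_x5 F) (to_x5 G)"
| "to_x5 (NOr F G) = XOr (to_x5 F) (to_x5 G)"
| "to_x5 (NSneg F) = XSneg (to_x5 F)"
| "to_x5 (NNot F) = XNot (to_x5 F)"

definition rule_x5 :: "'a rule \<Rightarrow> 'a x5" where
  "rule_x5 r = XImp (to_x5 (fst r)) (to_x5 (snd r))"

fun xsat :: "'a lit set \<Rightarrow> 'a lit set \<Rightarrow> 'a x5 \<Rightarrow> bool"
and xfal :: "'a lit set \<Rightarrow> 'a lit set \<Rightarrow> 'a x5 \<Rightarrow> bool" where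
  "xsat H T XBot = False"
| "xsat H T (XAtom p) = (Pos p \<in> H)"
| "xsat H T (XAnd \<phi> \<psi>) = (xsat H T \<phi> \<and> xsat H T \<psi>)"
| "xsat H T (XOr \<phi> \<psi>) = (xsat H T \<phi> \<or> xsat H T \<psi>)"
| "xsat H T (XSneg \<phi>) = xfal H T \<phi>"
| "xsat H T (XImp \<phi> \<psi>) =
     ((\<not> xsat H T \<phi> \<or> xsat H T \<psi>) \<and> (\<not> xsat T T \<phi> \<or> xsat T T \<psi>))"
| "xfal H T XBot = True"
| "xfal H T (XAtom p) = (SNeg p \<in> H)"
| "xfal H T (XAnd \<phi> \<psi>) = (xfal H T \<phi> \<or> xfal H T \<psi>)"
| "xfal H T (XOr \<phi> \<psi>) = (xfal H T \<phi> \<and> xfal H T \<psi>)"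
| "xfal H T (XSneg \<phi>) = xsat H T \<phi>"
| "xfal H T (XImp \<phi> \<psi>) = (xsat T T \<phi> \<and> xfal H T \<psi>)"

definition x5_interp :: "'a lit set \<Rightarrow> 'a lit set \<Rightarrow> bool" where
  "x5_interp H T \<longleftrightarrow> consistent H \<and> consistent T \<and> H \<subseteq> T"

definition x5_models :: "'a lit set \<Rightarrow> 'a lit set \<Rightarrow> 'a program \<Rightarrow> bool" where
  "x5_models H T \<Pi> \<longleftrightarrow> (\<forall>r \<in> \<Pi>. xsat H T (rule_x5 r))"

end

theory Submission
  imports Defs
begin

text \<open>Satisfaction at the ``there'' world \<open>\<langle>T,T\<rangle>\<close> is classical satisfaction by \<open>T\<close>,
  and satisfaction at \<open>\<langle>H,T\<rangle>\<close> of a nested expression is classical satisfaction by \<open>H\<close> of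
  its reduct: the two agree on every connective except \<open>\<not>\<close>, where \<open>\<langle>H,T\<rangle>\<close> satisfies
  \<open>\<not>F\<close> iff neither \<open>\<langle>H,T\<rangle>\<close> nor \<open>\<langle>T,T\<rangle>\<close> satisfies \<open>F\<close>, which by persistence from \<open>H\<close> to
  \<open>T\<close> means \<open>T \<Turnstile> \<not>F\<close>, exactly as the reduct prescribes. A rule \<open>F \<rightarrow> G\<close> is an
  implication, so it holds at \<open>\<langle>H,T\<rangle>\<close> iff it holds in \<open>H\<close> after reduction and in \<open>T\<close>.\<close>

lemma xsat_xfal_persistent:
  assumes "H \<subseteq> T"
  shows "(xsat H T \<phi> \<longrightarrow> xsat T T \<phi>) \<and> (xfal H T \<phi> \<longrightarrow> xfal T T \<phi>)"
  using assms by (induction \<phi>) auto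

lemma xsat_xfal_to_x5_there:
  "xsat T T (to_x5 F) = csat T F \<and> xfal T T (to_x5 F) = cfal T F"
  by (induction F) (auto simp: XTop_def XNot_def)

lemma xsat_xfal_to_x5_here:
  assumes "H \<subseteq> T"
  shows "xsat H T (to_x5 F) = csat H (reduct F T) \<and> xfal H T (to_x5 F) = cfal H (reduct F T)"
proof (induction F)
  case (NNot F)
  then show ?case
    using xsat_xfal_persistent[OF assms, of "to_x5 F"] xsat_xfal_to_x5_there[of T F]
    by (auto simp: XNot_def)
qed (auto simp: XTop_def XNot_def)

lemma xsat_rule_x5_iff:
  assumes "H \<subseteq> T"
  shows "xsat H T (rule_x5 (F, G)) \<longleftrightarrow>
    (csat H (reduct F T) \<longrightarrow> csat H (reduct G T)) \<and> (csat T F \<longrightarrow> csat T G)"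
  using xsat_xfal_to_x5_here[OF assms, of F] xsat_xfal_to_x5_here[OF assms, of G]
    xsat_xfal_to_x5_there[of T F] xsat_xfal_to_x5_there[of T G]
  by (simp add: rule_x5_def)

theorem proposition3:
  fixes H T :: "'a lit set" and \<Pi> :: "'a program"
  assumes "x5_interp H T"
  shows "x5_models H T \<Pi> \<longleftrightarrow> cmodel H (reduct_prog \<Pi> T) \<and> cmodel T \<Pi>"
proof -
  have "H \<subseteq> T"
    using assms by (simp add: x5_interp_def)
  show ?thesis
    unfolding x5_models_def cmodel_def reduct_prog_def
    using xsat_rule_x5_iff[OF \<open>H \<subseteq> T\<close>] by fastforce
qed

end
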